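(* Let $B\colon\mathbf{Set}\to\mathbf{Set}$ be a functor, $\Lambda$ a set, and $(\tau_\lambda\colon B[0,1]\to[0,1])_{\lambda\in\Lambda}$ arbitrary functions. For every coalgebra $\alpha\colon X\to BX$ and all $s,t\in X$, $d_\alpha(s,t)\ge d^L_\alpha(s,t)$.
   Context: Formulas: $\varphi::=\top\mid\neg\varphi\mid\min(\varphi_1,\varphi_2)\mid(\ominus q)\varphi\ (q\in\mathbb{Q}\cap[0,1])\mid\heartsuit_\lambda\varphi\ (\lambda\in\Lambda)$. Semantics $[\![\varphi]\!]_\alpha\colon X\to[0,1]$: $[\![\top]\!]=1$, $[\![\neg\varphi]\!]=1-[\![\varphi]\!]$, $[\![\min(\varphi_1,\varphi_2)]\!]=\min([\![\varphi_1]\!],[\![\varphi_2]\!])$, $[\![(\ominus q)\varphi]\!]=\max([\![\varphi]\!]-q,0)$ (pointwise), $[\![\heartsuit_\lambda\varphi]\!]=\tau_\lambda\circ B[\![\varphi]\!]\circ\alpha$. Logical distance: $d^L_\alpha(s,t)=\sup_\varphi|[\![\varphi]\!]_\alpha(s)-[\![\varphi]\!]_\alpha(t)|$. For a 1-bounded pseudometric $d$ on $X$, let $d_B$ on $BX$ be $d_B(t_1,t_2)=\sup_{\lambda\in\Lambda,h}|\tau_\lambda(Bh(t_1))-\tau_\lambda(Bh(t_2))|$, $h$ ranging over nonexpansive maps $(X,d)\to([0,1],d_e)$ with $d_e$ the Euclidean metric. The behavioral distance $d_\alpha$ is the pointwise least 1-bounded pseudometric $d$ on $X$ satisfying $d(s,t)=d_B(\alpha(s),\alpha(t))$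 for all $s,t$ (the greatest fixed point in the order $\sqsubseteq$ = pointwise $\ge$ on 1-bounded pseudometrics). *)

theory Defs
  imports Complex_Main
begin

(* The unit interval [0,1] is represented by the carrier {0..1} inside real.
   A Set-functor B is represented by its restriction to the objects X (type 'x)
   and [0,1]:  BX is the type 'bx, B[0,1] is the type 'bi, and
     Bxx f  : BX -> BX         for f : X -> X
     Bxi h  : BX -> B[0,1]     for h : X -> [0,1]
     Bii g  : B[0,1] -> B[0,1] for g : [0,1] -> [0,1]                     *)

definition is_functor_restr ::
  "(('x \<Rightarrow> 'x) \<Rightarrow> 'bx \<Rightarrow> 'bx) \<Rightarrow> (('x \<Rightarrow> real) \<Rightarrow> 'bx \<Rightarrow> 'bi)
    \<Rightarrow> ((real \<Rightarrow> real) \<Rightarrow> 'bi \<Rightarrow> 'bi) \<Rightarrow> bool" where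
  "is_functor_restr Bxx Bxi Bii \<longleftrightarrow>
     Bxx id = id \<and>
     (\<forall>f g. Bxx (g \<circ> f) = Bxx g \<circ> Bxx f) \<and>
     Bii id = id \<and>
     (\<forall>g g'. g ` {0..1} \<subseteq> {0..1} \<and> g' ` {0..1} \<subseteq> {0..1} \<and> (\<forall>r\<in>{0..1}. g r = g' r)
        \<longrightarrow> Bii g = Bii g') \<and>
     (\<forall>g g'. g ` {0..1} \<subseteq> {0..1} \<and> g' ` {0..1} \<subseteq> {0..1}
        \<longrightarrow> Bii (g' \<circ> g) = Bii g' \<circ> Bii g) \<and>
     (\<forall>h f. range h \<subseteq> {0..1} \<longrightarrow> Bxi (h \<circ> f) = Bxi h \<circ> Bxx f) \<and>
     (\<forall>h g. range h \<subseteq> {0..1} \<and> g ` {0..1} \<subseteq> {0..1}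
        \<longrightarrow> Bxi (g \<circ> h) = Bii g \<circ> Bxi h)"

datatype 'l form =
    FTop
  | FNeg "'l form"
  | FMin "'l form" "'l form"
  | FMinus rat "'l form"
  | FMod 'l "'l form"

fun wf_form :: "'l set \<Rightarrow> 'l form \<Rightarrow> bool" where
  "wf_form \<Lambda> FTop = True"
| "wf_form \<Lambda> (FNeg \<phi>) = wf_form \<Lambda> \<phi>"
| "wf_form \<Lambda> (FMin \<phi> \<psi>) = (wf_form \<Lambda> \<phi> \<and> wf_form \<Lambda> \<psi>)"
| "wf_form \<Lambda> (FMinus q \<phi>) = (0 \<le> q \<and> q \<le> 1 \<and> wf_form \<Lambda> \<phi>)"
| "wf_form \<Lambda> (FMod l \<phi>) = (l \<in> \<Lambda> \<and> wf_form \<Lambda> \<phi>)"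

fun sem :: "(('x \<Rightarrow> real) \<Rightarrow> 'bx \<Rightarrow> 'bi) \<Rightarrow> ('l \<Rightarrow> 'bi \<Rightarrow> real) \<Rightarrow> ('x \<Rightarrow> 'bx)
             \<Rightarrow> 'l form \<Rightarrow> 'x \<Rightarrow> real" where
  "sem Bxi \<tau> \<alpha> FTop = (\<lambda>x. 1)"
| "sem Bxi \<tau> \<alpha> (FNeg \<phi>) = (\<lambda>x. 1 - sem Bxi \<tau> \<alpha> \<phi> x)"
| "sem Bxi \<tau> \<alpha> (FMin \<phi> \<psi>) = (\<lambda>x. min (sem Bxi \<tau> \<alpha> \<phi> x) (sem Bxi \<tau> \<alpha> \<psi> x))"
| "sem Bxi \<tau> \<alpha> (FMinus q \<phi>) = (\<lambda>x. max (sem Bxi \<tau> \<alpha> \<phi> x - of_rat q) 0)"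
| "sem Bxi \<tau> \<alpha> (FMod l \<phi>) = (\<lambda>x. \<tau> l (Bxi (sem Bxi \<tau> \<alpha> \<phi>) (\<alpha> x)))"

definition logic_dist :: "'l set \<Rightarrow> (('x \<Rightarrow> real) \<Rightarrow> 'bx \<Rightarrow> 'bi) \<Rightarrow> ('l \<Rightarrow> 'bi \<Rightarrow> real)
     \<Rightarrow> ('x \<Rightarrow> 'bx) \<Rightarrow> 'x \<Rightarrow> 'x \<Rightarrow> real" where
  "logic_dist \<Lambda> Bxi \<tau> \<alpha> s t =
     (SUP \<phi> \<in> {\<phi>. wf_form \<Lambda> \<phi>}. \<bar>sem Bxi \<tau> \<alpha> \<phi> s - sem Bxi \<tau> \<alpha> \<phi> t\<bar>)"

definition bpm :: "('x \<Rightarrow> 'x \<Rightarrow> real) \<Rightarrow> bool" where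
  "bpm d \<longleftrightarrow> (\<forall>x. d x x = 0) \<and> (\<forall>x y. d x y = d y x) \<and>
     (\<forall>x y z. d x z \<le> d x y + d y z) \<and> (\<forall>x y. 0 \<le> d x y \<and> d x y \<le> 1)"

definition nonexp :: "('x \<Rightarrow> 'x \<Rightarrow> real) \<Rightarrow> ('x \<Rightarrow> real) \<Rightarrow> bool" where
  "nonexp d h \<longleftrightarrow> range h \<subseteq> {0..1} \<and> (\<forall>x y. \<bar>h x - h y\<bar> \<le> d x y)"

(* lifted distance d_B; supremum taken in [0,1] (empty sup = 0) *)
definition lift_dist :: "'l set \<Rightarrow> (('x \<Rightarrow> real) \<Rightarrow> 'bx \<Rightarrow> 'bi) \<Rightarrow> ('l \<Rightarrow> 'bi \<Rightarrow> real)
     \<Rightarrow> ('x \<Rightarrow> 'x \<Rightarrow> real) \<Rightarrow> 'bx \<Rightarrow> 'bx \<Rightarrow> real" where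
  "lift_dist \<Lambda> Bxi \<tau> d t1 t2 =
     (if \<Lambda> = {} then 0 else
      (SUP p \<in> \<Lambda> \<times> {h. nonexp d h}.
          \<bar>\<tau> (fst p) (Bxi (snd p) t1) - \<tau> (fst p) (Bxi (snd p) t2)\<bar>))"

definition is_fixpoint_pm :: "'l set \<Rightarrow> (('x \<Rightarrow> real) \<Rightarrow> 'bx \<Rightarrow> 'bi) \<Rightarrow> ('l \<Rightarrow> 'bi \<Rightarrow> real)
     \<Rightarrow> ('x \<Rightarrow> 'bx) \<Rightarrow> ('x \<Rightarrow> 'x \<Rightarrow> real) \<Rightarrow> bool" where
  "is_fixpoint_pm \<Lambda> Bxi \<tau> \<alpha> d \<longleftrightarrow>
     bpm d \<and> (\<forall>s t. d s t = lift_dist \<Lambda> Bxi \<tau> d (\<alpha> s) (\<alpha> t))"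

definition behav_dist :: "'l set \<Rightarrow> (('x \<Rightarrow> real) \<Rightarrow> 'bx \<Rightarrow> 'bi) \<Rightarrow> ('l \<Rightarrow> 'bi \<Rightarrow> real)
     \<Rightarrow> ('x \<Rightarrow> 'bx) \<Rightarrow> 'x \<Rightarrow> 'x \<Rightarrow> real" where
  "behav_dist \<Lambda> Bxi \<tau> \<alpha> = (THE d. is_fixpoint_pm \<Lambda> Bxi \<tau> \<alpha> d \<and>
      (\<forall>d'. is_fixpoint_pm \<Lambda> Bxi \<tau> \<alpha> d' \<longrightarrow> (\<forall>s t. d s t \<le> d' s t)))"

end

theory Submission
  imports Defs
begin

(* Every denotation [[phi]] is nonexpansive for any pseudometric d with
   d_B(alpha s, alpha t) <= d(s, t): for a modality this is precisely the definition of d_B as a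
   supremum over nonexpansive test functions, and the propositional connectives and
   truncated subtraction are nonexpansive maps on [0,1].  The behavioural distance is such a
   d, but only once the least fixpoint is known to exist (behav_dist is a definite description);
   existence follows from a Knaster-Tarski argument. *)

lemma bpm_SUP:
  fixes e :: "'i \<Rightarrow> 'x \<Rightarrow> 'x \<Rightarrow> real"
  assumes "I \<noteq> {}" and bpm: "\<And>i. i \<in> I \<Longrightarrow> bpm (e i)"
  shows "bpm (\<lambda>x y. SUP i\<in>I. e i x y)"
proof -
  have upper: "e i x y \<le> (SUP i\<in>I. e i x y)" if "i \<in> I" for i x y
    using bpm by (intro cSUP_upper that bdd_aboveI[of _ 1]) (auto simp: bpm_def)
  have "(SUP i\<in>I. e i x x) = 0" for x
    using \<open>I \<noteq> {}\<close> bpm by (simp add: bpm_def)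
  moreover have "(SUP i\<in>I. e i x y) = (SUP i\<in>I. e i y x)" for x y
    using bpm by (intro SUP_cong) (auto simp: bpm_def)
  moreover have "(SUP i\<in>I. e i x z) \<le> (SUP i\<in>I. e i x y) + (SUP i\<in>I. e i y z)" for x y z
  proof (rule cSUP_least[OF \<open>I \<noteq> {}\<close>])
    fix i assume "i \<in> I"
    then have "e i x z \<le> e i x y + e i y z" using bpm by (simp add: bpm_def)
    also have "\<dots> \<le> (SUP i\<in>I. e i x y) + (SUP i\<in>I. e i y z)"
      using upper[OF \<open>i \<in> I\<close>] by (rule add_mono) (rule upper[OF \<open>i \<in> I\<close>])
    finally show "e i x z \<le> (SUP i\<in>I. e i x y) + (SUP i\<in>I. e i y z)" .
  qed
  moreover have "0 \<le> (SUP i\<in>I. e i x y)" "(SUP i\<in>I. e i x y) \<le> 1" for x y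
  proof -
    obtain i where "i \<in> I" using \<open>I \<noteq> {}\<close> by blast
    then show "0 \<le> (SUP i\<in>I. e i x y)"
      using bpm upper by (meson bpm_def order_trans)
    show "(SUP i\<in>I. e i x y) \<le> 1"
      using \<open>I \<noteq> {}\<close> bpm by (intro cSUP_least) (auto simp: bpm_def)
  qed
  ultimately show ?thesis unfolding bpm_def by blast
qed

lemma bpm_abs_diff:
  assumes "\<And>x. f x \<in> {0..1}"
  shows "bpm (\<lambda>x y. \<bar>f x - f y\<bar> :: real)"
  unfolding bpm_def using assms by (auto simp: abs_le_iff) (smt (verit) atLeastAtMost_iff)+

lemma bpm_comp: "bpm d \<Longrightarrow> bpm (\<lambda>x y. d (f x) (f y))"
  by (simp add: bpm_def)

lemma bpm_least_fixpoint:
  fixes F :: "('x \<Rightarrow> 'x \<Rightarrow> real) \<Rightarrow> 'x \<Rightarrow> 'x \<Rightarrow> real"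
  assumes F_bpm: "\<And>d. bpm d \<Longrightarrow> bpm (F d)"
    and F_mono: "\<And>d d' x y. bpm d \<Longrightarrow> bpm d' \<Longrightarrow> (\<And>u v. d u v \<le> d' u v) \<Longrightarrow> F d x y \<le> F d' x y"
  obtains D where "bpm D" "F D = D" "\<And>d x y. bpm d \<Longrightarrow> F d = d \<Longrightarrow> D x y \<le> d x y"
proof -
  (* Pointwise infima of pseudometrics may violate the triangle inequality, so the least
     pre-fixpoint is built as the supremum of all pseudometrics below every pre-fixpoint. *)
  define Q where "Q = {d. bpm d \<and> (\<forall>x y. F d x y \<le> d x y)}"
  define L where "L = {e. bpm e \<and> (\<forall>d\<in>Q. \<forall>x y. e x y \<le> d x y)}"
  define D where "D = (\<lambda>x y. SUP e\<in>L. e x y)"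
  have "(\<lambda>_ _. 0) \<in> L" by (auto simp: L_def Q_def bpm_def)
  then have "L \<noteq> {}" by blast
  have D_bpm: "bpm D"
    unfolding D_def by (rule bpm_SUP) (use \<open>L \<noteq> {}\<close> in \<open>auto simp: L_def\<close>)
  have D_below_Q: "D x y \<le> d x y" if "d \<in> Q" for d x y
    unfolding D_def using \<open>L \<noteq> {}\<close> that by (auto simp: L_def intro!: cSUP_least)
  have above_L: "e x y \<le> D x y" if "e \<in> L" for e x y
    unfolding D_def by (rule cSUP_upper[OF that]) (auto intro!: bdd_aboveI[of _ 1] simp: L_def bpm_def)
  have "F D \<in> L"
  proof -
    have "F D x y \<le> d x y" if "d \<in> Q" for d x y
    proof -
      have "F D x y \<le> F d x y"
        using that D_bpm D_below_Q by (intro F_mono) (auto simp: Q_def)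
      also have "\<dots> \<le> d x y" using that by (simp add: Q_def)
      finally show ?thesis .
    qed
    then show ?thesis using F_bpm[OF D_bpm] by (auto simp: L_def)
  qed
  then have FD_le_D: "F D x y \<le> D x y" for x y by (rule above_L)
  then have "F D \<in> Q" using D_bpm F_bpm by (auto simp: Q_def intro!: F_mono)
  then have "D x y \<le> F D x y" for x y by (rule D_below_Q)
  with FD_le_D have "F D = D" by (intro ext order_antisym)
  moreover have "D x y \<le> d x y" if "bpm d" "F d = d" for d x y
    using that by (intro D_below_Q) (simp add: Q_def)
  ultimately show ?thesis using D_bpm that by blast
qed

lemma nonexp_mono: "nonexp d h \<Longrightarrow> (\<And>x y. d x y \<le> d' x y) \<Longrightarrow> nonexp d' h"
  unfolding nonexp_def by (meson order_trans)

lemma nonexp_const: "0 \<le> c \<Longrightarrow> c \<le> 1 \<Longrightarrow> (\<And>x y. 0 \<le> d x y) \<Longrightarrow> nonexp d (\<lambda>_. c)"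
  by (auto simp: nonexp_def)

lemma nonexp_one_minus: "nonexp d h \<Longrightarrow> nonexp d (\<lambda>x. 1 - h x)"
  by (auto simp: nonexp_def image_subset_iff abs_minus_commute)

lemma nonexp_min:
  assumes "nonexp d f" "nonexp d g"
  shows "nonexp d (\<lambda>x. min (f x) (g x))"
  unfolding nonexp_def
proof (intro conjI allI)
  show "range (\<lambda>x. min (f x) (g x)) \<subseteq> {0..1}"
    using assms by (auto simp: nonexp_def image_subset_iff min_def)
  fix x y
  have "\<bar>f x - f y\<bar> \<le> d x y" "\<bar>g x - g y\<bar> \<le> d x y"
    using assms by (auto simp: nonexp_def)
  then show "\<bar>min (f x) (g x) - min (f y) (g y)\<bar> \<le> d x y"
    by (simp add: min_def abs_le_iff)
qed

lemma nonexp_truncated_diff: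
  assumes "nonexp d h" "0 \<le> q"
  shows "nonexp d (\<lambda>x. max (h x - q) 0)"
  unfolding nonexp_def
proof (intro conjI allI)
  have "h x \<le> 1" for x
    using assms(1) by (auto simp: nonexp_def image_subset_iff)
  then show "range (\<lambda>x. max (h x - q) 0) \<subseteq> {0..1}"
    using assms(2) by (auto simp: max_def) (smt (verit))
  fix x y
  have "\<bar>h x - h y\<bar> \<le> d x y"
    using assms by (auto simp: nonexp_def)
  then show "\<bar>max (h x - q) 0 - max (h y - q) 0\<bar> \<le> d x y"
    by (simp add: max_def abs_le_iff)
qed

context
  fixes \<Lambda> :: "'l set" and \<tau> :: "'l \<Rightarrow> 'bi \<Rightarrow> real"
  assumes \<tau>_unit: "\<forall>l\<in>\<Lambda>. \<forall>b. \<tau> l b \<in> {0..1}"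
begin

lemma abs_tau_diff_le_one:
  assumes "l \<in> \<Lambda>"
  shows "\<bar>\<tau> l u - \<tau> l v\<bar> \<le> 1"
proof -
  have "\<tau> l u \<in> {0..1}" "\<tau> l v \<in> {0..1}"
    using \<tau>_unit assms by auto
  then show ?thesis by auto
qed

lemma lift_dist_upper:
  assumes "l \<in> \<Lambda>" "nonexp d h"
  shows "\<bar>\<tau> l (Bxi h a) - \<tau> l (Bxi h b)\<bar> \<le> lift_dist \<Lambda> Bxi \<tau> d a b"
proof -
  let ?f = "\<lambda>p. \<bar>\<tau> (fst p) (Bxi (snd p) a) - \<tau> (fst p) (Bxi (snd p) b)\<bar>"
  have "bdd_above (?f ` (\<Lambda> \<times> {h. nonexp d h}))"
    using abs_tau_diff_le_one by (intro bdd_aboveI[of _ 1]) auto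
  then have "?f (l, h) \<le> (SUP p\<in>\<Lambda> \<times> {h. nonexp d h}. ?f p)"
    using assms by (intro cSUP_upper) auto
  with assms(1) show ?thesis by (auto simp: lift_dist_def)
qed

lemma bpm_lift_dist:
  assumes "\<And>x y. 0 \<le> d x y"
  shows "bpm (lift_dist \<Lambda> Bxi \<tau> d)"
proof (cases "\<Lambda> = {}")
  case True
  then show ?thesis by (simp add: lift_dist_def bpm_def)
next
  case False
  then have "\<Lambda> \<times> {h. nonexp d h} \<noteq> {}"
    using nonexp_const[of 0 d] assms by auto
  then have "bpm (\<lambda>a b. SUP p\<in>\<Lambda> \<times> {h. nonexp d h}.
                 \<bar>\<tau> (fst p) (Bxi (snd p) a) - \<tau> (fst p) (Bxi (snd p) b)\<bar>)"
    by (rule bpm_SUP) (use \<tau>_unit in \<open>auto intro!: bpm_abs_diff\<close>)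
  with False show ?thesis by (simp add: lift_dist_def[abs_def])
qed

lemma lift_dist_mono:
  assumes "\<And>x y. 0 \<le> d x y" "\<And>x y. d x y \<le> d' x y"
  shows "lift_dist \<Lambda> Bxi \<tau> d a b \<le> lift_dist \<Lambda> Bxi \<tau> d' a b"
proof (cases "\<Lambda> = {}")
  case True
  then show ?thesis by (simp add: lift_dist_def)
next
  case False
  then have "\<Lambda> \<times> {h. nonexp d h} \<noteq> {}"
    using nonexp_const[of 0 d] assms(1) by auto
  then have "(SUP p\<in>\<Lambda> \<times> {h. nonexp d h}. \<bar>\<tau> (fst p) (Bxi (snd p) a) - \<tau> (fst p) (Bxi (snd p) b)\<bar>)
               \<le> lift_dist \<Lambda> Bxi \<tau> d' a b"
    by (rule cSUP_least) (auto intro!: lift_dist_upper nonexp_mono[OF _ assms(2)])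
  with False show ?thesis by (simp add: lift_dist_def)
qed

lemma behav_dist_is_fixpoint: "is_fixpoint_pm \<Lambda> Bxi \<tau> \<alpha> (behav_dist \<Lambda> Bxi \<tau> \<alpha>)"
proof -
  define F where "F d = (\<lambda>s t. lift_dist \<Lambda> Bxi \<tau> d (\<alpha> s) (\<alpha> t))" for d
  have fixpoint_iff: "is_fixpoint_pm \<Lambda> Bxi \<tau> \<alpha> d \<longleftrightarrow> bpm d \<and> F d = d" for d
    by (auto simp: is_fixpoint_pm_def F_def fun_eq_iff)
  have F_bpm: "bpm (F d)" if "bpm d" for d
    unfolding F_def by (rule bpm_comp[OF bpm_lift_dist]) (use that in \<open>simp add: bpm_def\<close>)
  have F_mono: "F d x y \<le> F d' x y" if "bpm d" "bpm d'" "\<And>u v. d u v \<le> d' u v" for d d' x y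
    unfolding F_def using that(1,3) by (intro lift_dist_mono) (simp_all add: bpm_def)
  obtain D where D: "bpm D" "F D = D" "\<And>d x y. bpm d \<Longrightarrow> F d = d \<Longrightarrow> D x y \<le> d x y"
    using bpm_least_fixpoint[of F, OF F_bpm F_mono] by blast
  have "behav_dist \<Lambda> Bxi \<tau> \<alpha> = D"
    unfolding behav_dist_def
  proof (rule the_equality)
    show "is_fixpoint_pm \<Lambda> Bxi \<tau> \<alpha> D \<and> (\<forall>d. is_fixpoint_pm \<Lambda> Bxi \<tau> \<alpha> d \<longrightarrow> (\<forall>s t. D s t \<le> d s t))"
      using D by (simp add: fixpoint_iff)
    fix d
    assume "is_fixpoint_pm \<Lambda> Bxi \<tau> \<alpha> d \<and> (\<forall>d'. is_fixpoint_pm \<Lambda> Bxi \<tau> \<alpha> d' \<longrightarrow> (\<forall>s t. d s t \<le> d' s t))"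
    with D show "d = D" by (intro ext order_antisym) (auto simp: fixpoint_iff)
  qed
  with D show ?thesis by (simp add: fixpoint_iff)
qed

lemma nonexp_modality:
  assumes "l \<in> \<Lambda>" "nonexp d h" "\<And>x y. lift_dist \<Lambda> Bxi \<tau> d (\<alpha> x) (\<alpha> y) \<le> d x y"
  shows "nonexp d (\<lambda>x. \<tau> l (Bxi h (\<alpha> x)))"
  unfolding nonexp_def
proof (intro conjI allI)
  show "range (\<lambda>x. \<tau> l (Bxi h (\<alpha> x))) \<subseteq> {0..1}"
    using \<tau>_unit assms(1) by auto
  fix x y
  have "\<bar>\<tau> l (Bxi h (\<alpha> x)) - \<tau> l (Bxi h (\<alpha> y))\<bar> \<le> lift_dist \<Lambda> Bxi \<tau> d (\<alpha> x) (\<alpha> y)"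
    using assms(1,2) by (rule lift_dist_upper)
  also have "\<dots> \<le> d x y" by (rule assms(3))
  finally show "\<bar>\<tau> l (Bxi h (\<alpha> x)) - \<tau> l (Bxi h (\<alpha> y))\<bar> \<le> d x y" .
qed

lemma nonexp_sem:
  assumes "\<And>x y. 0 \<le> d x y" "\<And>x y. lift_dist \<Lambda> Bxi \<tau> d (\<alpha> x) (\<alpha> y) \<le> d x y"
  shows "wf_form \<Lambda> \<phi> \<Longrightarrow> nonexp d (sem Bxi \<tau> \<alpha> \<phi>)"
proof (induction \<phi>)
  case FTop
  show ?case using assms(1) by (simp add: nonexp_const)
next
  case (FNeg \<phi>)
  then show ?case by (simp add: nonexp_one_minus)
next
  case (FMin \<phi> \<psi>)
  then show ?case by (simp add: nonexp_min)
next
  case (FMinus q \<phi>)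
  then show ?case by (simp add: nonexp_truncated_diff)
next
  case (FMod l \<phi>)
  then show ?case using assms(2) by (simp add: nonexp_modality)
qed

lemma logic_dist_le:
  assumes "\<And>x y. 0 \<le> d x y" "\<And>x y. lift_dist \<Lambda> Bxi \<tau> d (\<alpha> x) (\<alpha> y) \<le> d x y"
  shows "logic_dist \<Lambda> Bxi \<tau> \<alpha> s t \<le> d s t"
  unfolding logic_dist_def
proof (rule cSUP_least)
  show "{\<phi>. wf_form \<Lambda> \<phi>} \<noteq> {}"
    using wf_form.simps(1) by blast
  show "\<bar>sem Bxi \<tau> \<alpha> \<phi> s - sem Bxi \<tau> \<alpha> \<phi> t\<bar> \<le> d s t" if "\<phi> \<in> {\<phi>. wf_form \<Lambda> \<phi>}" for \<phi>
    using nonexp_sem[OF assms] that by (simp add: nonexp_def)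
qed

end

theorem corollaryV2:
  fixes Bxx :: "('x \<Rightarrow> 'x) \<Rightarrow> 'bx \<Rightarrow> 'bx"
    and Bxi :: "('x \<Rightarrow> real) \<Rightarrow> 'bx \<Rightarrow> 'bi"
    and Bii :: "(real \<Rightarrow> real) \<Rightarrow> 'bi \<Rightarrow> 'bi"
    and \<Lambda> :: "'l set"
    and \<tau> :: "'l \<Rightarrow> 'bi \<Rightarrow> real"
    and \<alpha> :: "'x \<Rightarrow> 'bx"
    and s t :: 'x
  assumes "is_functor_restr Bxx Bxi Bii"
    and "\<forall>l\<in>\<Lambda>. \<forall>b. \<tau> l b \<in> {0..1}"
  shows "behav_dist \<Lambda> Bxi \<tau> \<alpha> s t \<ge> logic_dist \<Lambda> Bxi \<tau> \<alpha> s t"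
proof -
  let ?d = "behav_dist \<Lambda> Bxi \<tau> \<alpha>"
  have "is_fixpoint_pm \<Lambda> Bxi \<tau> \<alpha> ?d"
    using assms(2) by (rule behav_dist_is_fixpoint)
  then have "bpm ?d" and "\<And>x y. lift_dist \<Lambda> Bxi \<tau> ?d (\<alpha> x) (\<alpha> y) = ?d x y"
    unfolding is_fixpoint_pm_def by simp_all
  then show ?thesis
    using assms(2) by (intro logic_dist_le) (auto simp: bpm_def)
qed

end
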